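(* The sub-set-operad of $\mathrm{RWS}$ generated by $A_\prec$ and $A_\succ$ consists exactly of the recursively labelled red and white trees in which every node has exactly one label (no empty nodes and no node with two or more labels).
   Context: Red and white trees: $\mathrm{RW}(n)$ is the set of finite rooted trees (children unordered) whose nodes $z$ carry possibly empty label sets $L(z)\subseteq[n]$ partitioning $[n]$, each empty node having at least two children; labelled nodes are white, an empty node is red iff all its children are white. Composition $T_1\circ_xT_2$ ($T_1\in\mathrm{RW}(m)$, $T_2\in\mathrm{RW}(n)$): relabel $T_1$ by $y\mapsto y+n-1$ for $y>x$ and $T_2$ by $y\mapsto y+x-1$; $z\ni x$ in $T_1$, $r$ = root of $T_2$. (W) $r$ not red: remove $x$ from $L(z)$, add $L(r)$ to $L(z)$, children of $r$ become children of $z$. (R1) $r$ red, $T_1$ the single node $\{x\}$: result $T_2$. (R2) $r$ red and ($z$ has a child or $|L(z)|\ge2$): remove $x$ from $L(z)$, attach $T_2$ as child subtree of $z$. (R3) $r$ red, $z$ non-root leaf with $L(z)=\{x\}$: delete $z$, children of $r$ become children of the parent of $z$. Colours recomputed. A tree is recursively labelled if for each node the union of label sets in its subtree is an interval of integers. $\mathrm{RWS}$ is the sub-set-operad generated by $A_\mu$ (single node $\{1,2\}$), $A_\prec$ (root $\{1\}$ with child $\{2\}$), $A_\succ$ (root $\{2\}$ with child $\{1\}$), $A_\odot$ (empty red root with children $\{1\},\{2\}$). *)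

theory Defs
  imports "HOL-Library.Multiset"
begin

datatype rt = Node "nat set" "rt multiset"

primrec lab :: "rt \<Rightarrow> nat set" where
  "lab (Node L cs) = L"

primrec kids :: "rt \<Rightarrow> rt multiset" where
  "kids (Node L cs) = cs"

primrec subtrees :: "rt \<Rightarrow> rt multiset" where
  "subtrees (Node L cs) = {#Node L cs#} + sum_mset (image_mset subtrees cs)"

definition labsets :: "rt \<Rightarrow> nat set multiset" where
  "labsets t = image_mset lab (subtrees t)"

primrec alllabs :: "rt \<Rightarrow> nat set" where
  "alllabs (Node L cs) = L \<union> \<Union> (set_mset (image_mset alllabs cs))"

text \<open>Colour: labelled nodes are white; an empty node is red iff all its
children are white (i.e. not red).\<close>
primrec red :: "rt \<Rightarrow> bool" where
  "red (Node L cs) = (L = {} \<and> (\<forall>b\<in>#image_mset red cs. \<not> b))"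

definition RW :: "nat \<Rightarrow> rt set" where
  "RW n = {t. (\<forall>A\<in>#labsets t. \<forall>B\<in>#labsets t - {#A#}. A \<inter> B = {})
             \<and> \<Union> (set_mset (labsets t)) = {1..n}
             \<and> (\<forall>s\<in>#subtrees t. lab s = {} \<longrightarrow> size (kids s) \<ge> 2)}"

primrec relabel :: "(nat \<Rightarrow> nat) \<Rightarrow> rt \<Rightarrow> rt" where
  "relabel f (Node L cs) = Node (f ` L) (image_mset (relabel f) cs)"

text \<open>Grafting T at the node containing x (after relabelling):
cases (W), (R2) at the node z containing x, and (R3) handled at the parent of z.\<close>
primrec graft :: "nat \<Rightarrow> rt \<Rightarrow> rt \<Rightarrow> rt" where
  "graft x T (Node L cs) =
     (if x \<in> L then
        (if red T then Node (L - {x}) (cs + {#T#})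
         else Node ((L - {x}) \<union> lab T) (cs + kids T))
      else Node L (sum_mset (image_mset
              (\<lambda>(c, g). if c = Node {x} {#} \<and> red T then kids T else {#g#})
              (image_mset (\<lambda>c. (c, graft x T c)) cs))))"

definition comp :: "nat \<Rightarrow> nat \<Rightarrow> rt \<Rightarrow> nat \<Rightarrow> rt \<Rightarrow> rt" where
  "comp m n T1 x T2 =
     (let T1' = relabel (\<lambda>y. if y > x then y + n - 1 else y) T1;
          T2' = relabel (\<lambda>y. y + x - 1) T2
      in if red T2' \<and> T1' = Node {x} {#} then T2'
         else graft x T2' T1')"

definition A_mu :: rt where "A_mu = Node {1,2} {#}"
definition A_prec :: rt where "A_prec = Node {1} {#Node {2} {#}#}"
definition A_succ :: rt where "A_succ = Node {2} {#Node {1} {#}#}"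
definition A_odot :: rt where "A_odot = Node {} {#Node {1} {#}, Node {2} {#}#}"

inductive gen_op :: "(nat \<times> rt) set \<Rightarrow> nat \<Rightarrow> rt \<Rightarrow> bool" for G where
  unit: "gen_op G 1 (Node {1} {#})"
| gens: "(n, t) \<in> G \<Longrightarrow> gen_op G n t"
| comp: "gen_op G m s \<Longrightarrow> gen_op G n t \<Longrightarrow> 1 \<le> x \<Longrightarrow> x \<le> m
         \<Longrightarrow> gen_op G (m + n - 1) (comp m n s x t)"

definition rec_labelled :: "rt \<Rightarrow> bool" where
  "rec_labelled t = (\<forall>s\<in>#subtrees t. \<exists>a b. alllabs s = {a..b})"

end

theory Submission
  imports Defs
begin

text \<open>
  Soundness: in a tree of the claimed form every root carries a label, so it is never red and a
  partial composition \<open>s \<circ>\<^sub>x t\<close> is always the grafting (W): the single label \<open>x\<close> of its node in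
  \<open>s\<close> is replaced by the root label of \<open>t\<close> and the children of that root are added. Since the
  labels of \<open>t\<close> fill exactly the gap opened at \<open>x\<close>, labels stay distinct and every subtree still
  carries an interval.

  Completeness, by induction on the arity \<open>n\<close>: let \<open>r\<close> be the root label and \<open>p = r \<plusminus> 1\<close> a
  neighbouring label, which occurs in some child \<open>c\<close>. If \<open>c\<close> is the leaf \<open>p\<close>, then the tree is
  \<open>C \<circ>\<^sub>a A\<^sub>\<prec>\<close> or \<open>C \<circ>\<^sub>a A\<^sub>\<succ>\<close> with \<open>a = min r p\<close>, where \<open>C\<close> is obtained by deleting the leaf and
  closing the gap. Otherwise the labels of \<open>c\<close> form an interval \<open>{a..b}\<close> with \<open>a < b\<close>, and the
  tree is \<open>C \<circ>\<^sub>a S\<close> where \<open>S\<close> is \<open>c\<close> shifted down to \<open>{1..b - a + 1}\<close> and \<open>C\<close> is the tree with \<open>c\<close>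
  collapsed to a leaf \<open>a\<close>; both factors have smaller arity.
\<close>

lemma image_mset_sum_mset: "image_mset f (\<Sum>\<^sub># M) = (\<Sum>N\<in>#M. image_mset f N)"
  by (induction M) auto

lemma filter_mset_sum_mset: "filter_mset P (\<Sum>\<^sub># M) = (\<Sum>N\<in>#M. filter_mset P N)"
  by (induction M) auto

lemma pairwise_disjoint_mset_iff:
  fixes M :: "'a set multiset"
  shows "(\<forall>A\<in>#M. \<forall>B\<in>#M - {#A#}. A \<inter> B = {}) \<longleftrightarrow> (\<forall>y. size (filter_mset (\<lambda>A. y \<in> A) M) \<le> 1)"
proof (intro iffI allI ballI)
  fix y
  assume disj: "\<forall>A\<in>#M. \<forall>B\<in>#M - {#A#}. A \<inter> B = {}"
  show "size (filter_mset (\<lambda>A. y \<in> A) M) \<le> 1"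
  proof (rule ccontr)
    assume many: "\<not> ?thesis"
    let ?F = "filter_mset (\<lambda>A. y \<in> A) M"
    obtain A where A: "A \<in># ?F"
      using many by (cases ?F) auto
    have "size (?F - {#A#}) \<noteq> 0"
      using many size_Diff_singleton[OF A] by simp
    then obtain B where "B \<in># ?F - {#A#}"
      by (metis multiset_nonemptyE size_empty)
    moreover have "?F - {#A#} = filter_mset (\<lambda>A. y \<in> A) (M - {#A#})"
      using A by simp
    ultimately have "B \<in># filter_mset (\<lambda>A. y \<in> A) (M - {#A#})"
      by metis
    then have "B \<in># M - {#A#}" "y \<in> B"
      by (simp_all del: filter_diff_mset)
    with A disj show False by auto
  qed
next
  fix A B
  assume occ: "\<forall>y. size (filter_mset (\<lambda>A. y \<in> A) M) \<le> 1"
    and A: "A \<in># M" and B: "B \<in># M - {#A#}"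
  show "A \<inter> B = {}"
  proof (rule ccontr)
    assume "A \<inter> B \<noteq> {}"
    then obtain y where "y \<in> A" "y \<in> B" by blast
    have "{#A, B#} \<subseteq># M"
      using A B by (metis insert_DiffM mset_subset_eq_add_mset_cancel single_subset_iff)
    then have "size (filter_mset (\<lambda>A. y \<in> A) {#A, B#}) \<le> size (filter_mset (\<lambda>A. y \<in> A) M)"
      by (intro size_mset_mono multiset_filter_mono)
    with \<open>y \<in> A\<close> \<open>y \<in> B\<close> occ[rule_format, of y] show False
      by simp
  qed
qed

lemma mem_subtrees_Node:
  "u \<in># subtrees (Node L cs) \<longleftrightarrow> u = Node L cs \<or> (\<exists>c\<in>#cs. u \<in># subtrees c)"
  by auto

lemma subtrees_self [simp]: "t \<in># subtrees t"
  by (cases t) auto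

lemma subtrees_trans: "u \<in># subtrees v \<Longrightarrow> v \<in># subtrees t \<Longrightarrow> u \<in># subtrees t"
  by (induction t) (auto simp: mem_subtrees_Node)

lemma alllabs_eq_UN_subtrees: "alllabs t = (\<Union>u\<in>set_mset (subtrees t). lab u)"
  by (induction t) (auto simp: mem_subtrees_Node)

lemma alllabs_subtree_subset: "u \<in># subtrees t \<Longrightarrow> alllabs u \<subseteq> alllabs t"
  unfolding alllabs_eq_UN_subtrees using subtrees_trans by blast

lemma lab_subset_alllabs: "lab t \<subseteq> alllabs t"
  by (cases t) auto

definition label_occ :: "nat \<Rightarrow> rt \<Rightarrow> nat" where
  "label_occ y t = size (filter_mset (\<lambda>u. y \<in> lab u) (subtrees t))"

lemma label_occ_Node:
  "label_occ y (Node L cs) = (if y \<in> L then 1 else 0) + (\<Sum>c\<in>#cs. label_occ y c)"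
  unfolding label_occ_def by (simp add: filter_mset_sum_mset image_mset.compositionality o_def)

lemma label_occ_leaf [simp]: "label_occ y (Node {p} {#}) = (if y = p then 1 else 0)"
  by (simp add: label_occ_Node)

lemma label_occ_pos_iff: "0 < label_occ y t \<longleftrightarrow> y \<in> alllabs t"
  unfolding label_occ_def alllabs_eq_UN_subtrees by (auto simp: nonempty_has_size[symmetric])

lemma label_occ_subtree_le: "u \<in># subtrees t \<Longrightarrow> label_occ y u \<le> label_occ y t"
proof (induction t)
  case (Node L cs)
  show ?case
  proof (cases "u = Node L cs")
    case False
    then obtain c where c: "c \<in># cs" "u \<in># subtrees c"
      using Node.prems by auto
    then have "label_occ y u \<le> label_occ y c"
      using Node.IH by blast
    also have "\<dots> \<le> (\<Sum>c\<in>#cs. label_occ y c)"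
      using c(1) by (auto dest!: multi_member_split)
    finally show ?thesis
      by (simp add: label_occ_Node)
  qed simp
qed

lemma label_occ_child_le: "label_occ y (Node L cs) \<le> 1 \<Longrightarrow> c \<in># cs \<Longrightarrow> label_occ y c \<le> 1"
  unfolding label_occ_Node by (auto dest!: multi_member_split)

lemma alllabs_Node_child_disjoint:
  assumes "label_occ y (Node L cs) \<le> 1" "c \<in># cs" "y \<in> alllabs c"
  shows "y \<notin> L" "\<forall>d\<in>#cs - {#c#}. y \<notin> alllabs d"
proof -
  obtain rest where cs: "cs = add_mset c rest"
    using assms(2) by (metis multi_member_split)
  have "0 < label_occ y c"
    using assms(3) label_occ_pos_iff by blast
  moreover have "(if y \<in> L then 1 else 0) + (label_occ y c + (\<Sum>d\<in>#rest. label_occ y d)) \<le> 1"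
    using assms(1) unfolding cs label_occ_Node by simp
  ultimately have "y \<notin> L" "(\<Sum>d\<in>#rest. label_occ y d) = 0"
    by (auto split: if_splits simp del: sum_mset_0_iff)
  then show "y \<notin> L" "\<forall>d\<in>#cs - {#c#}. y \<notin> alllabs d"
    using cs by (auto simp flip: label_occ_pos_iff)
qed

lemma label_occ_eq_labsets: "label_occ y t = size (filter_mset (\<lambda>A. y \<in> A) (labsets t))"
  unfolding label_occ_def labsets_def by (simp add: filter_mset_image_mset)

section \<open>Recursively labelled trees with one label per node\<close>

definition unilabelled :: "rt \<Rightarrow> bool" where
  "unilabelled t \<longleftrightarrow> (\<forall>u\<in>#subtrees t. card (lab u) = 1)"

definition rec_unilabelled :: "nat \<Rightarrow> rt \<Rightarrow> bool" where
  "rec_unilabelled n t \<longleftrightarrow>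
     unilabelled t \<and> (\<forall>y. label_occ y t \<le> 1) \<and> alllabs t = {1..n} \<and> rec_labelled t"

lemma unilabelled_Node: "unilabelled (Node L cs) \<longleftrightarrow> card L = 1 \<and> (\<forall>c\<in>#cs. unilabelled c)"
  unfolding unilabelled_def by auto

lemma unilabelled_card_lab: "unilabelled t \<Longrightarrow> card (lab t) = 1"
  unfolding unilabelled_def by simp

lemma unilabelled_lab_nonempty: "unilabelled t \<Longrightarrow> lab t \<noteq> {}"
  using unilabelled_card_lab by fastforce

lemma unilabelled_leaf: "unilabelled c \<Longrightarrow> kids c = {#} \<Longrightarrow> p \<in> alllabs c \<Longrightarrow> c = Node {p} {#}"
  by (cases c) (auto simp: unilabelled_Node card_1_singleton_iff)

lemma rec_labelled_Node:
  "rec_labelled (Node L cs) \<longleftrightarrow> (\<exists>a b. alllabs (Node L cs) = {a..b}) \<and> (\<forall>c\<in>#cs. rec_labelled c)"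
  unfolding rec_labelled_def by (auto simp del: alllabs.simps)

lemma rec_labelled_leaf [simp]: "rec_labelled (Node {p} {#})"
  unfolding rec_labelled_def by simp (metis atLeastAtMost_singleton)

lemma rec_unilabelled_iff_RW:
  "t \<in> RW n \<and> rec_labelled t \<and> (\<forall>s\<in>#subtrees t. card (lab s) = 1) \<longleftrightarrow> rec_unilabelled n t"
proof -
  have "\<Union> (set_mset (labsets t)) = alllabs t"
    unfolding labsets_def alllabs_eq_UN_subtrees by auto
  then show ?thesis
    unfolding RW_def rec_unilabelled_def unilabelled_def pairwise_disjoint_mset_iff label_occ_eq_labsets
    by auto
qed

lemma rec_unilabelled_lab_nonempty: "rec_unilabelled n t \<Longrightarrow> lab t \<noteq> {}"
  unfolding rec_unilabelled_def using unilabelled_lab_nonempty by blast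

lemma rec_unilabelled_arity_pos: "rec_unilabelled n t \<Longrightarrow> 1 \<le> n"
  using rec_unilabelled_lab_nonempty lab_subset_alllabs unfolding rec_unilabelled_def by fastforce

lemma rec_unilabelled_children:
  assumes "rec_unilabelled n (Node L cs)" "c \<in># cs"
  shows "unilabelled c" "rec_labelled c" "\<forall>y. label_occ y c \<le> 1"
proof -
  have "unilabelled (Node L cs)" "rec_labelled (Node L cs)" and occ: "\<forall>y. label_occ y (Node L cs) \<le> 1"
    using assms(1) by (auto simp: rec_unilabelled_def)
  then show "unilabelled c" "rec_labelled c"
    using assms(2) by (auto simp: unilabelled_Node rec_labelled_Node simp del: alllabs.simps)
  show "\<forall>y. label_occ y c \<le> 1"
    using label_occ_child_le assms(2) occ by blast
qed

lemma rec_unilabelled_edge: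
  assumes "{p, q} = {1, 2}"
  shows "rec_unilabelled 2 (Node {p} {#Node {q} {#}#})"
proof -
  have "p \<noteq> q" and all: "alllabs (Node {p} {#Node {q} {#}#}) = {1..2}"
    using assms by (auto simp: doubleton_eq_iff)
  moreover have "rec_labelled (Node {p} {#Node {q} {#}#})"
    unfolding rec_labelled_Node[of "{p}"] using all by auto
  ultimately show ?thesis
    unfolding rec_unilabelled_def by (auto simp: unilabelled_Node label_occ_Node)
qed

section \<open>Relabelling and grafting\<close>

lemma relabel_relabel: "relabel f (relabel g t) = relabel (f \<circ> g) t"
  by (induction t) (auto simp: image_mset.compositionality o_def image_image intro: image_mset_cong)

lemma relabel_idI: "(\<And>y. y \<in> alllabs t \<Longrightarrow> f y = y) \<Longrightarrow> relabel f t = t"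
proof (induction t)
  case (Node L cs)
  have "image_mset (relabel f) cs = image_mset id cs"
    by (rule image_mset_cong) (use Node in auto)
  then show ?case
    using Node.prems by auto
qed

lemma lab_relabel [simp]: "lab (relabel f t) = f ` lab t"
  by (cases t) auto

lemma alllabs_relabel [simp]: "alllabs (relabel f t) = f ` alllabs t"
  by (induction t) auto

lemma subtrees_relabel: "subtrees (relabel f t) = image_mset (relabel f) (subtrees t)"
  by (induction t)
    (auto simp: image_mset_sum_mset image_mset.compositionality o_def
      intro!: arg_cong[where f = sum_mset] image_mset_cong)

lemma unilabelled_relabel: "unilabelled t \<Longrightarrow> unilabelled (relabel f t)"
  unfolding unilabelled_def subtrees_relabel by (auto simp: card_Suc_eq)

lemma label_occ_relabel_inj:
  assumes "inj_on f (alllabs t)" "y \<in> alllabs t"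
  shows "label_occ (f y) (relabel f t) = label_occ y t"
proof -
  have "filter_mset (\<lambda>u. f y \<in> f ` lab u) (subtrees t) = filter_mset (\<lambda>u. y \<in> lab u) (subtrees t)"
  proof (rule filter_mset_cong [OF refl])
    fix u assume "u \<in># subtrees t"
    then have "lab u \<subseteq> alllabs t"
      unfolding alllabs_eq_UN_subtrees by auto
    with assms show "f y \<in> f ` lab u \<longleftrightarrow> y \<in> lab u"
      by (meson inj_on_image_mem_iff)
  qed
  then show ?thesis
    unfolding label_occ_def subtrees_relabel by (simp add: filter_mset_image_mset o_def)
qed

lemma label_occ_relabel_le:
  assumes "\<forall>y. label_occ y t \<le> 1" "inj_on f (alllabs t)"
  shows "label_occ z (relabel f t) \<le> 1"
proof (cases "z \<in> f ` alllabs t")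
  case True
  then obtain y where "y \<in> alllabs t" "z = f y" by auto
  with assms show ?thesis
    using label_occ_relabel_inj by simp
next
  case False
  then show ?thesis
    using label_occ_pos_iff[of z "relabel f t"] by simp
qed

lemma rec_unilabelled_relabel:
  assumes "unilabelled t" "\<forall>y. label_occ y t \<le> 1" "inj_on f (alllabs t)"
    and "f ` alllabs t = {1..n}" "\<forall>u\<in>#subtrees t. \<exists>a b. f ` alllabs u = {a..b}"
  shows "rec_unilabelled n (relabel f t)"
  using assms unilabelled_relabel label_occ_relabel_le
  unfolding rec_unilabelled_def rec_labelled_def subtrees_relabel by auto

lemma not_red_if_labelled: "lab T \<noteq> {} \<Longrightarrow> \<not> red T"
  by (cases T) auto

lemma graft_labelled:
  assumes "lab T \<noteq> {}"
  shows "graft x T (Node L cs) =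
    (if x \<in> L then Node ((L - {x}) \<union> lab T) (cs + kids T) else Node L (image_mset (graft x T) cs))"
proof -
  have "(\<Sum>(c, g)\<in>#image_mset (\<lambda>c. (c, graft x T c)) cs.
            if c = Node {x} {#} \<and> red T then kids T else {#g#}) = image_mset (graft x T) cs"
    using not_red_if_labelled[OF assms] by (simp add: image_mset.compositionality o_def)
  with not_red_if_labelled[OF assms] show ?thesis
    by simp
qed

declare graft.simps [simp del]

lemma graft_at: "lab T \<noteq> {} \<Longrightarrow> x \<in> L \<Longrightarrow> graft x T (Node L cs) = Node ((L - {x}) \<union> lab T) (cs + kids T)"
  by (simp add: graft_labelled)

lemma graft_below: "lab T \<noteq> {} \<Longrightarrow> x \<notin> L \<Longrightarrow> graft x T (Node L cs) = Node L (image_mset (graft x T) cs)"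
  by (simp add: graft_labelled)

lemma graft_absent: "lab T \<noteq> {} \<Longrightarrow> x \<notin> alllabs s \<Longrightarrow> graft x T s = s"
proof (induction s)
  case (Node L cs)
  have "image_mset (graft x T) cs = image_mset id cs"
    by (rule image_mset_cong) (use Node in auto)
  with Node.prems show ?case
    by (simp add: graft_below)
qed

lemma lab_graft:
  "lab T \<noteq> {} \<Longrightarrow> lab (graft x T v) = (if x \<in> lab v then (lab v - {x}) \<union> lab T else lab v)"
  by (cases v) (simp add: graft_labelled)

lemma label_occ_graft:
  assumes "lab T \<noteq> {}" "unilabelled s" "label_occ x s \<le> 1"
  shows "label_occ y (graft x T s) = (if y = x then 0 else label_occ y s) + label_occ x s * label_occ y T"
  using assms(2,3)
proof (induction s)
  case (Node L cs)
  show ?case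
  proof (cases "x \<in> L")
    case True
    with Node.prems have "L = {x}"
      by (auto simp: unilabelled_Node card_1_singleton_iff)
    moreover have "\<forall>c\<in>#cs. label_occ x c = 0"
      using Node.prems(2) True by (simp add: label_occ_Node)
    moreover have "label_occ y T = (if y \<in> lab T then 1 else 0) + (\<Sum>c\<in>#kids T. label_occ y c)"
      by (cases T) (simp add: label_occ_Node)
    ultimately show ?thesis
      using True by (auto simp: graft_at assms(1) label_occ_Node)
  next
    case False
    have "label_occ y (graft x T c) = (if y = x then 0 else label_occ y c) + label_occ x c * label_occ y T"
      if "c \<in># cs" for c
      using Node that label_occ_child_le by (auto simp: unilabelled_Node)
    then have "(\<Sum>c\<in>#cs. label_occ y (graft x T c))
        = (if y = x then 0 else \<Sum>c\<in>#cs. label_occ y c) + (\<Sum>c\<in>#cs. label_occ x c) * label_occ y T"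
      by (simp add: sum_mset.distrib sum_mset_distrib_right cong: image_mset_cong)
    with False show ?thesis
      by (simp add: graft_below assms(1) label_occ_Node image_mset.compositionality o_def)
  qed
qed

lemma subtrees_graft:
  assumes "lab T \<noteq> {}" "label_occ x s \<le> 1" "u \<in># subtrees (graft x T s)"
  shows "u \<in># subtrees T \<or> (\<exists>v\<in>#subtrees s. u = graft x T v)"
  using assms(2,3)
proof (induction s arbitrary: u)
  case (Node L cs)
  show ?case
  proof (cases "x \<in> L")
    case True
    then have "u \<in># subtrees (Node ((L - {x}) \<union> lab T) (cs + kids T))"
      using Node.prems(2) by (simp add: graft_at[OF assms(1)])
    then consider "u = graft x T (Node L cs)" | c where "c \<in># cs" "u \<in># subtrees c"
      | c where "c \<in># kids T" "u \<in># subtrees c"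
      using True by (auto simp: graft_at[OF assms(1)])
    then show ?thesis
    proof cases
      case (2 c)
      with True Node.prems(1) have "x \<notin> alllabs u"
        using alllabs_Node_child_disjoint(1) alllabs_subtree_subset by blast
      then have "graft x T u = u"
        by (rule graft_absent[OF assms(1)])
      moreover have "u \<in># subtrees (Node L cs)"
        using 2 by auto
      ultimately show ?thesis
        by metis
    next
      case (3 c)
      then show ?thesis
        by (cases T) auto
    qed (use subtrees_self in blast)
  next
    case False
    then consider "u = graft x T (Node L cs)" | c where "c \<in># cs" "u \<in># subtrees (graft x T c)"
      using Node.prems(2) by (auto simp: graft_below[OF assms(1)])
    then show ?thesis
    proof cases
      case (2 c)
      then show ?thesis
        using Node.IH[OF 2(1) label_occ_child_le[OF Node.prems(1) 2(1)] 2(2)] by auto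
    qed (use subtrees_self in blast)
  qed
qed

lemma alllabs_graft:
  assumes "lab T \<noteq> {}" "label_occ x s \<le> 1"
  shows "alllabs (graft x T s) = (if x \<in> alllabs s then (alllabs s - {x}) \<union> alllabs T else alllabs s)"
  using assms(2)
proof (induction s)
  case (Node L cs)
  show ?case
  proof (cases "x \<in> L")
    case True
    then have "x \<notin> alllabs c" if "c \<in># cs" for c
      using Node.prems alllabs_Node_child_disjoint(1) that by blast
    moreover have "alllabs T = lab T \<union> (\<Union>c\<in>set_mset (kids T). alllabs c)"
      by (cases T) auto
    ultimately show ?thesis
      using True by (auto simp: graft_at[OF assms(1)])
  next
    case False
    have "alllabs (graft x T c) = (if x \<in> alllabs c then (alllabs c - {x}) \<union> alllabs T else alllabs c)"
      if "c \<in># cs" for c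
      using Node.IH label_occ_child_le[OF Node.prems] that by blast
    with False show ?thesis
      by (auto simp: graft_below[OF assms(1)] split: if_splits)
  qed
qed

lemma unilabelled_graft:
  assumes "unilabelled S" "unilabelled T" "label_occ x S \<le> 1"
  shows "unilabelled (graft x T S)"
  unfolding unilabelled_def
proof
  have T: "card (lab T) = 1" "lab T \<noteq> {}"
    using assms(2) unilabelled_card_lab unilabelled_lab_nonempty by blast+
  fix u assume "u \<in># subtrees (graft x T S)"
  then have "u \<in># subtrees T \<or> (\<exists>v\<in>#subtrees S. u = graft x T v)"
    using subtrees_graft T(2) assms(3) by blast
  then show "card (lab u) = 1"
  proof
    assume "\<exists>v\<in>#subtrees S. u = graft x T v"
    then obtain v where v: "v \<in># subtrees S" "u = graft x T v" by blast
    then have "card (lab v) = 1"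
      using assms(1) unfolding unilabelled_def by blast
    with v T show ?thesis
      by (auto simp: lab_graft card_1_singleton_iff)
  qed (use assms(2) in \<open>auto simp: unilabelled_def\<close>)
qed

lemma label_occ_graft_le:
  assumes "unilabelled S" "lab T \<noteq> {}" "\<forall>y. label_occ y S \<le> 1" "\<forall>y. label_occ y T \<le> 1"
    and "alllabs S \<inter> alllabs T \<subseteq> {x}"
  shows "label_occ y (graft x T S) \<le> 1"
proof -
  have "label_occ y (graft x T S) = (if y = x then 0 else label_occ y S) + label_occ x S * label_occ y T"
    using label_occ_graft assms(1-3) by blast
  moreover have "label_occ y S = 0 \<or> label_occ y T = 0" if "y \<noteq> x"
    using assms(5) that label_occ_pos_iff by blast
  ultimately show ?thesis
    using assms(3,4)[rule_format, of y] assms(3)[rule_format, of x]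
    by (cases "y = x") (auto simp: le_Suc_eq)
qed

lemma graft_onto_leaf_child:
  assumes "lab c \<noteq> {}" "a \<noteq> r" "\<forall>d\<in>#rest. a \<notin> alllabs d"
  shows "graft a c (Node {r} (add_mset (Node {a} {#}) rest)) = Node {r} (add_mset c rest)"
proof -
  have "graft a c (Node {a} {#}) = c"
    using graft_at[OF assms(1), of a "{a}" "{#}"] by (cases c) simp
  moreover have "image_mset (graft a c) rest = image_mset id rest"
    using graft_absent[OF assms(1)] assms(3) by (intro image_mset_cong) simp
  ultimately show ?thesis
    using graft_below[OF assms(1)] assms(2) by simp
qed

section \<open>Opening and closing gaps in label intervals\<close>

text \<open>Translation by \<open>l - k\<close>, stated without subtraction since the labels are natural numbers.\<close>

lemma image_atLeastAtMost_translate: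
  fixes f :: "nat \<Rightarrow> nat"
  assumes "c \<le> d" "\<And>y. c \<le> y \<Longrightarrow> y \<le> d \<Longrightarrow> f y + k = y + l"
  shows "f ` {c..d} = {c + l - k..d + l - k}"
proof
  show "f ` {c..d} \<subseteq> {c + l - k..d + l - k}"
    using assms(2) by force
  show "{c + l - k..d + l - k} \<subseteq> f ` {c..d}"
  proof
    fix z assume z: "z \<in> {c + l - k..d + l - k}"
    have "k \<le> c + l"
      using assms(2)[of c] assms(1) by simp
    with z assms(1) have "z + k - l \<in> {c..d}"
      by auto
    moreover from this have "f (z + k - l) = z"
      using assms(2)[of "z + k - l"] \<open>k \<le> c + l\<close> z by auto
    ultimately show "z \<in> f ` {c..d}"
      by (metis imageI)
  qed
qed

lemma image_atLeastAtMost_translate_ex: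
  fixes f :: "nat \<Rightarrow> nat"
  assumes "\<And>y. c \<le> y \<Longrightarrow> y \<le> d \<Longrightarrow> f y + k = y + l"
  shows "\<exists>a b. f ` {c..d} = {a..b}"
proof (cases "c \<le> d")
  case True
  then show ?thesis
    using image_atLeastAtMost_translate[OF True assms] by blast
next
  case False
  then have "f ` {c..d} = {1..0}" by simp
  then show ?thesis by blast
qed

lemma shift_image_atLeastAtMost: "1 \<le> x \<Longrightarrow> (\<lambda>y. y + x - 1) ` {c..d} = {c + x - 1..d + x - 1 :: nat}"
  using image_add_atLeastAtMost[of "x - 1" c d] by (simp add: add.commute)

definition open_gap :: "nat \<Rightarrow> nat \<Rightarrow> nat \<Rightarrow> nat" where
  "open_gap x n y = (if x < y then y + n - 1 else y)"

definition close_gap :: "nat \<Rightarrow> nat \<Rightarrow> nat \<Rightarrow> nat" where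
  "close_gap a b y = (if b < y then y - (b - a) else y)"

lemma inj_open_gap: "1 \<le> n \<Longrightarrow> inj (open_gap x n)"
  unfolding open_gap_def inj_def by auto

lemma open_gap_image_interval: "x \<notin> {c..d} \<Longrightarrow> \<exists>a b. open_gap x n ` {c..d} = {a..b}"
proof (cases "d < x")
  case True
  then show ?thesis
    using image_atLeastAtMost_translate_ex[of c d "open_gap x n" 0 0] by (auto simp: open_gap_def)
next
  case False
  moreover assume "x \<notin> {c..d}"
  ultimately show ?thesis
    using image_atLeastAtMost_translate_ex[of c d "open_gap x n" 1 n] by (auto simp: open_gap_def)
qed

lemma open_gap_image_insert:
  assumes "1 \<le> n" "c \<le> x" "x \<le> d"
  shows "(open_gap x n ` {c..d} - {x}) \<union> {x..x + n - 1} = {c..d + n - 1}"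
proof -
  have "{c..d} = {c..x} \<union> {Suc x..d}"
    using assms by auto
  moreover have "open_gap x n ` {c..x} = {c..x}"
    by (auto simp: open_gap_def)
  moreover have "open_gap x n ` {Suc x..d} = {x + n..d + n - 1}"
  proof (cases "x < d")
    case True
    then show ?thesis
      using assms(1) image_atLeastAtMost_translate[of "Suc x" d "open_gap x n" 1 n]
      by (auto simp: open_gap_def)
  qed (use assms in auto)
  ultimately have "open_gap x n ` {c..d} = {c..x} \<union> {x + n..d + n - 1}"
    by (simp add: image_Un)
  then show ?thesis
    using assms by auto
qed

lemma inj_on_close_gap: "inj_on (close_gap a b) (- {a<..b})"
  unfolding close_gap_def inj_on_def by auto

lemma close_gap_image_interval:
  assumes "{c..d} \<inter> {a<..b} = {}"
  shows "\<exists>c' d'. close_gap a b ` {c..d} = {c'..d'}"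
proof (cases "d \<le> b")
  case True
  then show ?thesis
    using image_atLeastAtMost_translate_ex[of c d "close_gap a b" 0 0] by (auto simp: close_gap_def)
next
  case False
  moreover have "b \<notin> {c..d} \<inter> {a<..b}"
    using assms by blast
  ultimately have "b < c \<or> b \<le> a"
    by auto
  then show ?thesis
    using image_atLeastAtMost_translate_ex[of c d "close_gap a b" "b - a" 0] by (auto simp: close_gap_def)
qed

lemma close_gap_image:
  assumes "a \<le> b" "b \<le> n"
  shows "close_gap a b ` ({1..n} - {a<..b}) = {1..n - (b - a)}"
proof -
  have "{1..n} - {a<..b} = {1..a} \<union> {b<..n}"
    using assms by auto
  moreover have "close_gap a b ` {1..a} = {1..a}"
    using assms by (auto simp: close_gap_def)
  moreover have "close_gap a b ` {b<..n} = {a<..n - (b - a)}"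
  proof (cases "b < n")
    case True
    then have "close_gap a b ` {Suc b..n} = {Suc b - (b - a)..n - (b - a)}"
      using image_atLeastAtMost_translate[of "Suc b" n "close_gap a b" "b - a" 0] by (auto simp: close_gap_def)
    with assms show ?thesis
      by (simp add: atLeastSucAtMost_greaterThanAtMost Suc_diff_le)
  qed (use assms in auto)
  ultimately have "close_gap a b ` ({1..n} - {a<..b}) = {1..a} \<union> {a<..n - (b - a)}"
    by (simp add: image_Un)
  then show ?thesis
    using assms by auto
qed

lemma open_gap_close_gap: "a \<le> b \<Longrightarrow> y \<notin> {a<..b} \<Longrightarrow> open_gap a (b - a + 1) (close_gap a b y) = y"
  unfolding open_gap_def close_gap_def by auto

lemma comp_labelled:
  "lab t \<noteq> {} \<Longrightarrow> comp m n s x t = graft x (relabel (\<lambda>y. y + x - 1) t) (relabel (open_gap x n) s)"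
  unfolding comp_def open_gap_def Let_def using not_red_if_labelled[of "relabel (\<lambda>y. y + x - 1) t"] by auto

lemma comp_close_gap:
  assumes "lab S \<noteq> {}" "a \<le> b" "alllabs t \<inter> {a<..b} = {}"
  shows "comp m (b - a + 1) (relabel (close_gap a b) t) a S = graft a (relabel (\<lambda>y. y + a - 1) S) t"
proof -
  have "open_gap a (b - a + 1) (close_gap a b y) = y" if "y \<in> alllabs t" for y
    using assms(2,3) that by (intro open_gap_close_gap) auto
  then have "relabel (open_gap a (b - a + 1)) (relabel (close_gap a b) t) = t"
    unfolding relabel_relabel by (intro relabel_idI) simp
  then show ?thesis
    using comp_labelled[OF assms(1)] by simp
qed

section \<open>Soundness\<close>

lemma alllabs_graft_open_gap:
  assumes T: "lab T \<noteq> {}" "alllabs T = {x..x + n - 1}" and n: "1 \<le> n"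
    and w: "label_occ x (relabel (open_gap x n) w) \<le> 1" "alllabs w = {c..d}"
  shows "\<exists>a b. alllabs (graft x T (relabel (open_gap x n) w)) = {a..b}"
proof -
  have "x \<in> alllabs (relabel (open_gap x n) w) \<longleftrightarrow> x \<in> {c..d}"
    using w(2) n by (auto simp: open_gap_def)
  then show ?thesis
    using alllabs_graft[OF T(1) w(1)] T(2) w(2) open_gap_image_insert[OF n] open_gap_image_interval
    by (cases "x \<in> {c..d}") auto
qed

lemma rec_labelled_graft:
  assumes s: "rec_labelled s" "\<forall>y. label_occ y s \<le> 1"
    and t: "rec_labelled t" "lab t \<noteq> {}" "alllabs t = {1..n}"
    and x: "1 \<le> x"
  shows "rec_labelled (graft x (relabel (\<lambda>y. y + x - 1) t) (relabel (open_gap x n) s))"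
    (is "rec_labelled (graft x ?T ?S)")
  unfolding rec_labelled_def
proof
  have n: "1 \<le> n"
    using t lab_subset_alllabs by fastforce
  have labT: "lab ?T \<noteq> {}"
    using t(2) by simp
  have allT: "alllabs ?T = {x..x + n - 1}"
    using t(3) shift_image_atLeastAtMost[OF x, of 1 n] by (simp add: add.commute)
  have occS: "label_occ x ?S \<le> 1"
    using label_occ_relabel_le[OF s(2)] inj_open_gap[OF n] by (blast intro: inj_on_subset)
  fix u assume "u \<in># subtrees (graft x ?T ?S)"
  then have "u \<in># subtrees ?T \<or> (\<exists>v\<in>#subtrees ?S. u = graft x ?T v)"
    using subtrees_graft[OF labT occS] by blast
  then show "\<exists>a b. alllabs u = {a..b}"
  proof
    assume "u \<in># subtrees ?T"
    then obtain w where "w \<in># subtrees t" "u = relabel (\<lambda>y. y + x - 1) w"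
      unfolding subtrees_relabel by auto
    moreover obtain c d where "alllabs w = {c..d}"
      using t(1) calculation unfolding rec_labelled_def by blast
    ultimately show ?thesis
      using shift_image_atLeastAtMost[OF x] by auto
  next
    assume "\<exists>v\<in>#subtrees ?S. u = graft x ?T v"
    then obtain w where w: "w \<in># subtrees s" "u = graft x ?T (relabel (open_gap x n) w)"
      unfolding subtrees_relabel by auto
    then obtain c d where "alllabs w = {c..d}"
      using s(1) unfolding rec_labelled_def by blast
    moreover have "relabel (open_gap x n) w \<in># subtrees ?S"
      using w(1) unfolding subtrees_relabel by simp
    then have "label_occ x (relabel (open_gap x n) w) \<le> 1"
      using label_occ_subtree_le[of _ ?S x] occS by (meson order_trans)
    ultimately show ?thesis
      using alllabs_graft_open_gap[OF labT allT n] w(2) by blast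
  qed
qed

lemma rec_unilabelled_comp:
  assumes s: "rec_unilabelled m s" and t: "rec_unilabelled n t" and x: "1 \<le> x" "x \<le> m"
  shows "rec_unilabelled (m + n - 1) (comp m n s x t)"
proof -
  define S where "S = relabel (open_gap x n) s"
  define T where "T = relabel (\<lambda>y. y + x - 1) t"
  have n: "1 \<le> n" and labT: "lab T \<noteq> {}"
    using t rec_unilabelled_arity_pos rec_unilabelled_lab_nonempty unfolding T_def by auto
  have inj: "inj (open_gap x n)" "inj (\<lambda>y::nat. y + x - 1)"
    using inj_open_gap[OF n] x(1) by (auto simp: inj_def)
  have alllabs: "alllabs S = open_gap x n ` {1..m}" "alllabs T = {x..x + n - 1}"
    using s t shift_image_atLeastAtMost[OF x(1), of 1 n] unfolding S_def T_def rec_unilabelled_def by auto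
  have occ: "\<forall>y. label_occ y S \<le> 1" "\<forall>y. label_occ y T \<le> 1"
    using s t label_occ_relabel_le inj unfolding S_def T_def rec_unilabelled_def by (blast intro: inj_on_subset)+
  have uni: "unilabelled S" "unilabelled T"
    using s t unilabelled_relabel unfolding S_def T_def rec_unilabelled_def by blast+
  have x_in_S: "x \<in> alllabs S"
    using alllabs x by (auto simp: open_gap_def)
  have overlap: "alllabs S \<inter> alllabs T \<subseteq> {x}"
    using alllabs by (auto simp: open_gap_def)
  have "rec_unilabelled (m + n - 1) (graft x T S)"
    unfolding rec_unilabelled_def
  proof (intro conjI allI)
    show "unilabelled (graft x T S)"
      using unilabelled_graft[OF uni] occ(1) by blast
    show "label_occ y (graft x T S) \<le> 1" for y
      using label_occ_graft_le[OF uni(1) labT occ overlap] .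
    show "alllabs (graft x T S) = {1..m + n - 1}"
      using x_in_S alllabs_graft[OF labT] occ(1) alllabs open_gap_image_insert[OF n] x by simp
    show "rec_labelled (graft x T S)"
      using rec_labelled_graft s t x(1) rec_unilabelled_lab_nonempty[OF t]
      unfolding S_def T_def rec_unilabelled_def by blast
  qed
  then show ?thesis
    using comp_labelled[OF rec_unilabelled_lab_nonempty[OF t]] unfolding S_def T_def by simp
qed

lemma rec_unilabelled_if_gen_op:
  "gen_op {(2, A_prec), (2, A_succ)} n t \<Longrightarrow> rec_unilabelled n t"
proof (induction rule: gen_op.induct)
  case unit
  show ?case
    unfolding rec_unilabelled_def by (simp add: unilabelled_Node)
next
  case (gens n t)
  then show ?case
    using rec_unilabelled_edge by (auto simp: A_prec_def A_succ_def)
next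
  case (comp m s n t x)
  then show ?case
    using rec_unilabelled_comp by blast
qed

section \<open>Completeness\<close>

lemma rec_unilabelled_close_gap:
  assumes "unilabelled (Node L cs)" "\<forall>y. label_occ y (Node L cs) \<le> 1" "\<forall>c\<in>#cs. rec_labelled c"
    and "alllabs (Node L cs) = {1..n} - {a<..b}" "a \<le> b" "b \<le> n"
  shows "rec_unilabelled (n - (b - a)) (relabel (close_gap a b) (Node L cs))"
proof (rule rec_unilabelled_relabel)
  show "inj_on (close_gap a b) (alllabs (Node L cs))"
    using inj_on_close_gap by (rule inj_on_subset) (use assms(4) in auto)
  show "close_gap a b ` alllabs (Node L cs) = {1..n - (b - a)}"
    using close_gap_image assms(4-6) by simp
  show "\<forall>u\<in>#subtrees (Node L cs). \<exists>c d. close_gap a b ` alllabs u = {c..d}"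
  proof
    fix u assume "u \<in># subtrees (Node L cs)"
    then consider "u = Node L cs" | c where "c \<in># cs" "u \<in># subtrees c"
      by auto
    then show "\<exists>c d. close_gap a b ` alllabs u = {c..d}"
    proof cases
      case (2 c)
      then obtain c' d' where cd: "alllabs u = {c'..d'}"
        using assms(3) unfolding rec_labelled_def by blast
      have "alllabs u \<subseteq> alllabs (Node L cs)"
        using 2 by (meson alllabs_subtree_subset mem_subtrees_Node)
      with cd assms(4) have "{c'..d'} \<inter> {a<..b} = {}"
        by blast
      then show ?thesis
        using cd close_gap_image_interval by simp
    qed (use \<open>close_gap a b ` alllabs (Node L cs) = {1..n - (b - a)}\<close> in blast)
  qed
qed (use assms in auto)

lemma rec_unilabelled_shift_down:
  assumes "unilabelled c" "\<forall>y. label_occ y c \<le> 1" "rec_labelled c" "alllabs c = {a..b}" "1 \<le> a" "a \<le> b"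
  shows "rec_unilabelled (b - a + 1) (relabel (\<lambda>y. y - (a - 1)) c)"
proof (rule rec_unilabelled_relabel)
  show "inj_on (\<lambda>y. y - (a - 1)) (alllabs c)"
    using assms(4,5) by (auto simp: inj_on_def)
  show "(\<lambda>y. y - (a - 1)) ` alllabs c = {1..b - a + 1}"
    using image_atLeastAtMost_translate[of a b "\<lambda>y. y - (a - 1)" "a - 1" 0] assms(4-6) by auto
  show "\<forall>u\<in>#subtrees c. \<exists>c d. (\<lambda>y. y - (a - 1)) ` alllabs u = {c..d}"
  proof
    fix u assume u: "u \<in># subtrees c"
    then obtain c' d' where cd: "alllabs u = {c'..d'}"
      using assms(3) unfolding rec_labelled_def by blast
    then have "\<And>y. c' \<le> y \<Longrightarrow> y \<le> d' \<Longrightarrow> y - (a - 1) + (a - 1) = y + 0"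
      using alllabs_subtree_subset[OF u] assms(4,5) by auto
    then show "\<exists>c d. (\<lambda>y. y - (a - 1)) ` alllabs u = {c..d}"
      unfolding cd by (rule image_atLeastAtMost_translate_ex)
  qed
qed (use assms in auto)

lemma rec_unilabelled_remove_leaf:
  assumes t: "rec_unilabelled n (Node {r} (add_mset (Node {p} {#}) rest))" and rp: "{r, p} = {a, a + 1}"
  shows "alllabs (Node {a} rest) = {1..n} - {a<..a + 1}" "1 \<le> a" "a + 1 \<le> n"
    and "rec_unilabelled (n - 1) (relabel (close_gap a (a + 1)) (Node {a} rest))"
proof -
  let ?t = "Node {r} (add_mset (Node {p} {#}) rest)"
  have occ: "\<forall>y. label_occ y ?t \<le> 1" and all: "alllabs ?t = {1..n}"
    using t by (auto simp: rec_unilabelled_def)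
  have "r \<notin> alllabs d" "p \<notin> alllabs d" if "d \<in># rest" for d
    using alllabs_Node_child_disjoint(1)[of r "{r}" "add_mset (Node {p} {#}) rest" d]
      alllabs_Node_child_disjoint(2)[of p "{r}" "add_mset (Node {p} {#}) rest" "Node {p} {#}"]
      occ that by auto
  then have "{a, a + 1} \<inter> alllabs d = {}" if "d \<in># rest" for d
    using that rp[symmetric] by auto
  moreover have "{a<..a + 1} = {a + 1}"
    by auto
  ultimately show all': "alllabs (Node {a} rest) = {1..n} - {a<..a + 1}" and "1 \<le> a" "a + 1 \<le> n"
    using rp all by (auto simp: insert_commute)
  have "label_occ y (Node {a} rest) \<le> label_occ y ?t" for y
    using rp unfolding label_occ_Node by (auto simp: doubleton_eq_iff)
  then have "\<forall>y. label_occ y (Node {a} rest) \<le> 1"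
    using occ order_trans by blast
  moreover have "unilabelled (Node {a} rest)" "\<forall>c\<in>#rest. rec_labelled c"
    using rec_unilabelled_children[OF t] by (auto simp: unilabelled_Node)
  ultimately show "rec_unilabelled (n - 1) (relabel (close_gap a (a + 1)) (Node {a} rest))"
    using rec_unilabelled_close_gap[of "{a}" rest n a "a + 1"] all' \<open>a + 1 \<le> n\<close> by simp
qed

lemma decompose_leaf_child:
  assumes t: "rec_unilabelled n (Node {r} (add_mset (Node {p} {#}) rest))" and "p = r + 1 \<or> r = p + 1"
  shows "\<exists>G a C. (2, G) \<in> {(2::nat, A_prec), (2, A_succ)} \<and> rec_unilabelled (n - 1) C \<and>
           1 \<le> a \<and> a + 1 \<le> n \<and> comp (n - 1) 2 C a G = Node {r} (add_mset (Node {p} {#}) rest)"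
proof -
  obtain G a where G: "G = A_prec \<and> a = r \<and> p = r + 1 \<or> G = A_succ \<and> a = p \<and> r = p + 1"
    and gen: "(2, G) \<in> {(2::nat, A_prec), (2, A_succ)}"
    using assms(2) by blast
  have rp: "{r, p} = {a, a + 1}" and labG: "lab G \<noteq> {}"
    and G_shift: "relabel (\<lambda>y. y + a - 1) G = Node {r} {#Node {p} {#}#}"
    using G by (auto simp: A_prec_def A_succ_def)
  define t0 where "t0 = Node {a} rest"
  note t0 = rec_unilabelled_remove_leaf[OF t rp, folded t0_def]
  have "alllabs t0 \<inter> {a<..a + 1} = {}"
    using t0(1) by blast
  then have "comp (n - 1) 2 (relabel (close_gap a (a + 1)) t0) a G = graft a (Node {r} {#Node {p} {#}#}) t0"
    using comp_close_gap[OF labG, of a "a + 1" t0 "n - 1"] G_shift by (simp add: numeral_2_eq_2)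
  also have "\<dots> = Node {r} (add_mset (Node {p} {#}) rest)"
    by (simp add: t0_def graft_at)
  finally show ?thesis
    using gen t0(2-4) by blast
qed

lemma alllabs_interval_proper:
  assumes "unilabelled c" "\<forall>y. label_occ y c \<le> 1" "kids c \<noteq> {#}" "alllabs c = {a..b}"
  shows "a < b"
proof -
  obtain q cs where c: "c = Node {q} cs"
    using assms(1) unfolding unilabelled_def
    by (metis card_1_singletonE lab.simps rt.exhaust subtrees_self)
  obtain d where d: "d \<in># cs"
    using assms(3) c by fastforce
  then have "card (lab d) = 1"
    using assms(1) c unfolding unilabelled_def by auto
  then obtain q' where "q' \<in> lab d"
    by (metis card_1_singletonE singletonI)
  then have "q' \<in> alllabs d"
    using lab_subset_alllabs by blast
  then have "q' \<noteq> q" "q' \<in> alllabs c"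
    using alllabs_Node_child_disjoint(1)[of q' "{q}" cs d] assms(2) c d by auto
  moreover have "q \<in> alllabs c"
    using c by simp
  ultimately show ?thesis
    using assms(4) by auto
qed

lemma rec_unilabelled_collapse_child:
  assumes t: "rec_unilabelled n (Node {r} (add_mset c rest))" and ab: "alllabs c = {a..b}" "a \<le> b"
  shows "rec_unilabelled (n - (b - a)) (relabel (close_gap a b) (Node {r} (add_mset (Node {a} {#}) rest)))"
proof -
  let ?t = "Node {r} (add_mset c rest)" and ?t' = "Node {r} (add_mset (Node {a} {#}) rest)"
  have occ: "\<forall>y. label_occ y ?t \<le> 1" and all: "alllabs ?t = {1..n}"
    using t by (auto simp: rec_unilabelled_def)
  have r: "r \<notin> {a..b}" and rest: "\<forall>d\<in>#rest. {a..b} \<inter> alllabs d = {}"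
    using alllabs_Node_child_disjoint[OF occ[rule_format], of c] ab by auto
  have "label_occ y ?t' \<le> label_occ y ?t" for y
    using label_occ_pos_iff[of a c] ab unfolding label_occ_Node by auto
  then have occ': "\<forall>y. label_occ y ?t' \<le> 1"
    using occ le_trans by blast
  have uni': "unilabelled ?t'" and kids': "\<forall>d\<in>#add_mset (Node {a} {#}) rest. rec_labelled d"
    using rec_unilabelled_children[OF t] by (auto simp: unilabelled_Node)
  have all': "alllabs ?t' = {1..n} - {a<..b}"
    using all ab r rest by (auto simp: disjoint_iff)
  have "b \<le> n"
    using all ab by auto
  with ab(2) show ?thesis
    using rec_unilabelled_close_gap[OF uni' occ' kids' all'] by simp
qed

lemma decompose_inner_child:
  assumes t: "rec_unilabelled n (Node {r} (add_mset c rest))" and "kids c \<noteq> {#}"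
  shows "\<exists>a k C S. rec_unilabelled (n + 1 - k) C \<and> rec_unilabelled k S \<and> 1 < k \<and> k < n \<and>
           1 \<le> a \<and> a \<le> n + 1 - k \<and> comp (n + 1 - k) k C a S = Node {r} (add_mset c rest)"
proof -
  let ?t = "Node {r} (add_mset c rest)"
  have occ: "\<forall>y. label_occ y ?t \<le> 1" and all: "alllabs ?t = {1..n}"
    using t by (auto simp: rec_unilabelled_def)
  have "c \<in># add_mset c rest"
    by simp
  note c = rec_unilabelled_children[OF t this]
  obtain a b where ab: "alllabs c = {a..b}"
    using c(2) unfolding rec_labelled_def by (meson subtrees_self)
  have "a < b"
    using alllabs_interval_proper[OF c(1,3) \<open>kids c \<noteq> {#}\<close> ab] .
  have r: "r \<notin> {a..b}" and rest: "\<forall>d\<in>#rest. {a..b} \<inter> alllabs d = {}"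
    using alllabs_Node_child_disjoint[OF occ[rule_format], of c] ab by auto
  moreover have "{a..b} \<subseteq> {1..n}" "r \<in> {1..n}"
    using all ab by auto
  ultimately have "1 \<le> a" "b \<le> n" "b - a + 1 < n"
    using \<open>a < b\<close> by auto
  let ?t' = "Node {r} (add_mset (Node {a} {#}) rest)"
  define C where "C = relabel (close_gap a b) ?t'"
  define S where "S = relabel (\<lambda>y. y - (a - 1)) c"
  have C: "rec_unilabelled (n - (b - a)) C"
    unfolding C_def using rec_unilabelled_collapse_child[OF t ab] \<open>a < b\<close> by simp
  have S: "rec_unilabelled (b - a + 1) S"
    unfolding S_def using rec_unilabelled_shift_down c ab \<open>1 \<le> a\<close> \<open>a < b\<close> by simp
  have "relabel (\<lambda>y. y + a - 1) S = c"
    unfolding S_def relabel_relabel using ab \<open>1 \<le> a\<close> by (intro relabel_idI) auto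
  moreover have "alllabs ?t' \<inter> {a<..b} = {}"
    using r rest by (auto simp: disjoint_iff)
  ultimately have "comp (n - (b - a)) (b - a + 1) C a S = graft a c ?t'"
    unfolding C_def using comp_close_gap[OF rec_unilabelled_lab_nonempty[OF S], of a b ?t'] \<open>a < b\<close> by simp
  also have "\<dots> = ?t"
    using r rest \<open>a < b\<close>
    by (intro graft_onto_leaf_child unilabelled_lab_nonempty[OF c(1)]) (auto simp: disjoint_iff)
  finally have "comp (n - (b - a)) (b - a + 1) C a S = ?t" .
  moreover have "n + 1 - (b - a + 1) = n - (b - a)"
    by simp
  ultimately show ?thesis
    using C S \<open>1 \<le> a\<close> \<open>a < b\<close> \<open>b \<le> n\<close> \<open>b - a + 1 < n\<close>
    by (intro exI[of _ a] exI[of _ "b - a + 1"] exI[of _ C] exI[of _ S]) auto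
qed

lemma rec_unilabelled_adjacent_child:
  assumes t: "rec_unilabelled n (Node {r} cs)" and "cs \<noteq> {#}"
  shows "\<exists>c rest p. cs = add_mset c rest \<and> p \<in> alllabs c \<and> (p = r + 1 \<or> r = p + 1)"
proof -
  have occ: "\<forall>y. label_occ y (Node {r} cs) \<le> 1" and all: "alllabs (Node {r} cs) = {1..n}"
    using t by (auto simp: rec_unilabelled_def)
  obtain c0 where c0: "c0 \<in># cs"
    using \<open>cs \<noteq> {#}\<close> by (meson multiset_nonemptyE)
  then obtain q where "q \<in> alllabs c0"
    using unilabelled_lab_nonempty[OF rec_unilabelled_children(1)[OF t c0]] lab_subset_alllabs by blast
  then have "q \<noteq> r" "q \<in> {1..n}"
    using alllabs_Node_child_disjoint(1)[of q "{r}" cs c0] occ c0 all by auto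
  moreover have "r \<in> {1..n}"
    using all by auto
  ultimately have "2 \<le> n"
    by auto
  define p where "p = (if 2 \<le> r then r - 1 else r + 1)"
  have p: "p \<in> {1..n}" "p = r + 1 \<or> r = p + 1"
    using \<open>2 \<le> n\<close> \<open>r \<in> {1..n}\<close> unfolding p_def by auto
  then have "p \<in> alllabs (Node {r} cs)" "p \<noteq> r"
    using all by auto
  then obtain c where "c \<in># cs" "p \<in> alllabs c"
    by auto
  with p show ?thesis
    by (metis multi_member_split)
qed

lemma gen_op_if_rec_unilabelled:
  "rec_unilabelled n t \<Longrightarrow> gen_op {(2, A_prec), (2, A_succ)} n t"
proof (induction n arbitrary: t rule: less_induct)
  case (less n t)
  let ?G = "{(2::nat, A_prec), (2, A_succ)}"
  obtain r cs where t: "t = Node {r} cs"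
    using less.prems unfolding rec_unilabelled_def unilabelled_def
    by (metis card_1_singletonE lab.simps rt.exhaust subtrees_self)
  show ?case
  proof (cases "cs = {#}")
    case True
    then have "{r} = {1..n}"
      using less.prems t by (simp add: rec_unilabelled_def)
    then have "n = 1" "r = 1"
      by (metis atLeastAtMost_singleton_iff)+
    with t True show ?thesis
      using gen_op.unit by simp
  next
    case False
    then obtain c rest p where cs: "cs = add_mset c rest" "p \<in> alllabs c" "p = r + 1 \<or> r = p + 1"
      using rec_unilabelled_adjacent_child less.prems t by blast
    show ?thesis
    proof (cases "kids c = {#}")
      case True
      then have "c = Node {p} {#}"
        using unilabelled_leaf rec_unilabelled_children(1)[OF less.prems[unfolded t]] cs by simp
      with less.prems t cs(1) have "rec_unilabelled n (Node {r} (add_mset (Node {p} {#}) rest))"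
        by simp
      from decompose_leaf_child[OF this cs(3)] obtain G a C where C: "(2, G) \<in> ?G"
        "rec_unilabelled (n - 1) C" "1 \<le> a" "a + 1 \<le> n" "comp (n - 1) 2 C a G = t"
        using t cs(1) \<open>c = Node {p} {#}\<close> by blast
      have "gen_op ?G (n - 1 + 2 - 1) (comp (n - 1) 2 C a G)"
        using less.IH[OF _ C(2)] gen_op.gens[OF C(1)] C(3,4) by (intro gen_op.comp) auto
      with C show ?thesis
        by simp
    next
      case False
      then obtain a k C S where C: "rec_unilabelled (n + 1 - k) C" "rec_unilabelled k S" "1 < k" "k < n"
        "1 \<le> a" "a \<le> n + 1 - k" "comp (n + 1 - k) k C a S = t"
        using decompose_inner_child less.prems t cs by blast
      have "gen_op ?G (n + 1 - k + k - 1) (comp (n + 1 - k) k C a S)"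
        using less.IH[OF _ C(1)] less.IH[OF _ C(2)] C(3-6) by (intro gen_op.comp) auto
      with C show ?thesis
        by simp
    qed
  qed
qed

theorem mainTheorem11:
  "gen_op {(2, A_prec), (2, A_succ)} n t \<longleftrightarrow>
     t \<in> RW n \<and> rec_labelled t \<and> (\<forall>s\<in>#subtrees t. card (lab s) = 1)"
  unfolding rec_unilabelled_iff_RW using gen_op_if_rec_unilabelled rec_unilabelled_if_gen_op by blast

end
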